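(* Let $A$ be a quasi-quantale such that $(\bigvee X)a=\bigvee\{xa\mid x\in X\}$ for every subset $X\subseteq A$ and every $a\in A$. Then for each multiplicative nucleus $d$ on $A$, the set of fixed points $A_d=\{a\in A\mid d(a)=a\}$ (with the order of $A$, joins $d(\bigvee X)$ and meets as in $A$) is a frame.
   Context: A quasi-quantale is a complete lattice $A$ equipped with an associative binary operation $(a,b)\mapsto ab$ such that for every directed subset $X\subseteq A$ (non-empty, and any two elements of $X$ have an upper bound in $X$) and every $a\in A$: $(\bigvee X)a=\bigvee\{xa\mid x\in X\}$ and $a(\bigvee X)=\bigvee\{ax\mid x\in X\}$. An inflator on $A$ is a monotone map $d\colon A\to A$ with $a\leq d(a)$ for all $a$. A multiplicative nucleus is an inflator $d$ with $d\circ d=d$, $d(a\wedge b)=d(a)\wedge d(b)$ and $d(ab)=d(a)\wedge d(b)$ for all $a,b\in A$. A frame is a complete lattice satisfying $a\wedge\bigvee X=\bigvee\{a\wedge x\mid x\in X\}$ for all $a$ and all subsets $X$. *)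

theory Defs
  imports Main
begin

definition directed_set :: "'a::order set \<Rightarrow> bool" where
  "directed_set X \<longleftrightarrow> X \<noteq> {} \<and> (\<forall>x\<in>X. \<forall>y\<in>X. \<exists>z\<in>X. x \<le> z \<and> y \<le> z)"

definition quasi_quantale :: "('a::complete_lattice \<Rightarrow> 'a \<Rightarrow> 'a) \<Rightarrow> bool" where
  "quasi_quantale m \<longleftrightarrow>
     (\<forall>a b c. m (m a b) c = m a (m b c)) \<and>
     (\<forall>X a. directed_set X \<longrightarrow>
        m (Sup X) a = Sup ((\<lambda>x. m x a) ` X) \<and> m a (Sup X) = Sup ((\<lambda>x. m a x) ` X))"

definition inflator :: "('a::complete_lattice \<Rightarrow> 'a) \<Rightarrow> bool" where
  "inflator d \<longleftrightarrow> mono d \<and> (\<forall>a. a \<le> d a)"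

definition multiplicative_nucleus ::
  "('a::complete_lattice \<Rightarrow> 'a \<Rightarrow> 'a) \<Rightarrow> ('a \<Rightarrow> 'a) \<Rightarrow> bool" where
  "multiplicative_nucleus m d \<longleftrightarrow> inflator d \<and> d \<circ> d = d \<and>
     (\<forall>a b. d (inf a b) = inf (d a) (d b)) \<and> (\<forall>a b. d (m a b) = inf (d a) (d b))"

definition is_lub_in :: "'a::order set \<Rightarrow> 'a set \<Rightarrow> 'a \<Rightarrow> bool" where
  "is_lub_in S X u \<longleftrightarrow> u \<in> S \<and> (\<forall>x\<in>X. x \<le> u) \<and> (\<forall>v\<in>S. (\<forall>x\<in>X. x \<le> v) \<longrightarrow> u \<le> v)"

definition is_glb_in :: "'a::order set \<Rightarrow> 'a set \<Rightarrow> 'a \<Rightarrow> bool" where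
  "is_glb_in S X l \<longleftrightarrow> l \<in> S \<and> (\<forall>x\<in>X. l \<le> x) \<and> (\<forall>v\<in>S. (\<forall>x\<in>X. v \<le> x) \<longrightarrow> v \<le> l)"

definition join_in :: "'a::order set \<Rightarrow> 'a set \<Rightarrow> 'a" where
  "join_in S X = (THE u. is_lub_in S X u)"

definition meet_in :: "'a::order set \<Rightarrow> 'a \<Rightarrow> 'a \<Rightarrow> 'a" where
  "meet_in S a b = (THE l. is_glb_in S {a, b} l)"

definition frame_on :: "'a::order set \<Rightarrow> bool" where
  "frame_on S \<longleftrightarrow>
     (\<forall>X\<subseteq>S. \<exists>u. is_lub_in S X u) \<and> (\<forall>X\<subseteq>S. \<exists>l. is_glb_in S X l) \<and>
     (\<forall>a\<in>S. \<forall>X\<subseteq>S. meet_in S a (join_in S X) = join_in S ((\<lambda>x. meet_in S a x) ` X))"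

end

theory Submission
  imports Defs
begin

text \<open>The fixed points of a closure operator d form a complete lattice whose meets are those
  of A and whose joins are d applied to those of A.  For a multiplicative nucleus the law
  d (x a) = d x \<sqinter> d a turns the distributivity of the product over joins into
  a \<sqinter> d (\<Squnion>X) = d (\<Squnion>{a \<sqinter> x | x \<in> X}), which is the frame law in the fixed points.\<close>

lemma is_lub_in_unique: "is_lub_in S X u \<Longrightarrow> is_lub_in S X v \<Longrightarrow> u = (v::'a::order)"
  unfolding is_lub_in_def by (meson order_antisym)

lemma is_glb_in_unique: "is_glb_in S X u \<Longrightarrow> is_glb_in S X v \<Longrightarrow> u = (v::'a::order)"
  unfolding is_glb_in_def by (meson order_antisym)

lemma join_in_eq: "is_lub_in S X u \<Longrightarrow> join_in S X = u"
  unfolding join_in_def using is_lub_in_unique by blast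

lemma meet_in_eq: "is_glb_in S {a, b} l \<Longrightarrow> meet_in S a b = l"
  unfolding meet_in_def using is_glb_in_unique by blast

lemma fixed_points_is_lub_in:
  fixes d :: "'a::complete_lattice \<Rightarrow> 'a"
  assumes "inflator d" and "d \<circ> d = d" and "X \<subseteq> {a. d a = a}"
  shows "is_lub_in {a. d a = a} X (d (Sup X))"
  unfolding is_lub_in_def
proof (intro conjI ballI impI)
  show "d (Sup X) \<in> {a. d a = a}"
    using assms(2) by (simp add: fun_eq_iff)
  fix x assume "x \<in> X"
  then show "x \<le> d (Sup X)"
    using assms(1) by (meson Sup_upper inflator_def order_trans)
next
  fix v assume v: "v \<in> {a. d a = a}" "\<forall>x\<in>X. x \<le> v"
  then have "Sup X \<le> v"
    by (simp add: Sup_least)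
  then have "d (Sup X) \<le> d v"
    using assms(1) by (simp add: inflator_def monoD)
  then show "d (Sup X) \<le> v"
    using v by simp
qed

lemma fixed_points_is_glb_in:
  fixes d :: "'a::complete_lattice \<Rightarrow> 'a"
  assumes "inflator d" and "X \<subseteq> {a. d a = a}"
  shows "is_glb_in {a. d a = a} X (Inf X)"
  unfolding is_glb_in_def
proof (intro conjI ballI impI)
  have "d (Inf X) \<le> x" if "x \<in> X" for x
  proof -
    have "d (Inf X) \<le> d x"
      using assms(1) that by (simp add: Inf_lower inflator_def monoD)
    then show ?thesis
      using assms(2) that by auto
  qed
  then have "d (Inf X) \<le> Inf X"
    by (simp add: Inf_greatest)
  then show "Inf X \<in> {a. d a = a}"
    using assms(1) by (simp add: antisym inflator_def)
qed (auto intro: Inf_lower Inf_greatest)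

lemma multiplicative_nucleus_inf_Sup:
  fixes m :: "'a::complete_lattice \<Rightarrow> 'a \<Rightarrow> 'a" and d :: "'a \<Rightarrow> 'a"
  assumes nucleus: "multiplicative_nucleus m d"
    and Sup_mult: "\<And>X a. m (Sup X) a = Sup ((\<lambda>x. m x a) ` X)"
    and a: "d a = a" and X: "X \<subseteq> {a. d a = a}"
  shows "inf a (d (Sup X)) = d (Sup ((\<lambda>x. inf a x) ` X))"
proof (rule antisym)
  have mono: "mono d" and infl: "\<And>a. a \<le> d a" and idem: "\<And>a. d (d a) = d a"
    and d_inf: "\<And>a b. d (inf a b) = inf (d a) (d b)" and d_mult: "\<And>a b. d (m a b) = inf (d a) (d b)"
    using nucleus unfolding multiplicative_nucleus_def inflator_def by (auto simp: fun_eq_iff)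
  have "m x a \<le> inf a x" if "x \<in> X" for x
    using infl[of "m x a"] d_mult[of x a] a X that by (auto simp: inf_commute)
  then have "Sup ((\<lambda>x. m x a) ` X) \<le> Sup ((\<lambda>x. inf a x) ` X)"
    by (meson SUP_mono)
  then have "d (m (Sup X) a) \<le> d (Sup ((\<lambda>x. inf a x) ` X))"
    using mono by (simp add: Sup_mult monoD)
  then show "inf a (d (Sup X)) \<le> d (Sup ((\<lambda>x. inf a x) ` X))"
    using d_mult a by (simp add: inf_commute)
  have "Sup ((\<lambda>x. inf a x) ` X) \<le> inf a (d (Sup X))"
    by (rule SUP_least) (meson Sup_upper infl inf_mono order_refl order_trans)
  then have "d (Sup ((\<lambda>x. inf a x) ` X)) \<le> d (inf a (d (Sup X)))"
    using mono by (simp add: monoD)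
  also have "\<dots> = inf a (d (Sup X))"
    using d_inf a idem by simp
  finally show "d (Sup ((\<lambda>x. inf a x) ` X)) \<le> inf a (d (Sup X))" .
qed

theorem corollary3p11:
  fixes m :: "'a::complete_lattice \<Rightarrow> 'a \<Rightarrow> 'a" and d :: "'a \<Rightarrow> 'a"
  assumes "quasi_quantale m"
    and "\<forall>X a. m (Sup X) a = Sup ((\<lambda>x. m x a) ` X)"
    and "multiplicative_nucleus m d"
  shows "frame_on {a. d a = a}
     \<and> (\<forall>X\<subseteq>{a. d a = a}. is_lub_in {a. d a = a} X (d (Sup X)))
     \<and> (\<forall>X\<subseteq>{a. d a = a}. is_glb_in {a. d a = a} X (Inf X))"
proof -
  define S where "S = {a. d a = a}"
  have closure: "inflator d" "d \<circ> d = d"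
    using assms(3) by (simp_all add: multiplicative_nucleus_def)
  note lub = fixed_points_is_lub_in[OF closure, folded S_def]
  note glb = fixed_points_is_glb_in[OF closure(1), folded S_def]
  have meet: "meet_in S a x = inf a x" if "a \<in> S" "x \<in> S" for a x
    using meet_in_eq[OF glb[of "{a, x}"]] that by simp
  have "meet_in S a (join_in S X) = join_in S ((\<lambda>x. meet_in S a x) ` X)"
    if "a \<in> S" "X \<subseteq> S" for a X
  proof -
    have "(\<lambda>x. meet_in S a x) ` X = (\<lambda>x. inf a x) ` X"
      using meet that by (intro image_cong) auto
    moreover have "(\<lambda>x. inf a x) ` X \<subseteq> S"
      using glb[of "{a, _}"] that by (auto simp: is_glb_in_def)
    moreover have "d (Sup X) \<in> S"
      using lub[OF \<open>X \<subseteq> S\<close>] by (simp add: is_lub_in_def)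
    moreover have "inf a (d (Sup X)) = d (Sup ((\<lambda>x. inf a x) ` X))"
      using multiplicative_nucleus_inf_Sup[OF assms(3)] assms(2) that by (simp add: S_def)
    ultimately show ?thesis
      using that by (simp add: join_in_eq[OF lub] meet)
  qed
  then show ?thesis
    using lub glb unfolding frame_on_def S_def by blast
qed

end
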